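(* Let $K\in\{\mathcal{T},\mathcal{O},\mathcal{I}\}$ and let $G_K(L,H)$ be any reflection group in canonical form for $K$, and let $n\ge2$ and $G_{\mathcal{D}_n}(L',H')$ be any reflection group in canonical form for the dicyclic group $\mathcal{D}_n$. Then $G_K(L,H)$ and $G_{\mathcal{D}_n}(L',H')$ are not isomorphic.
   Context: $\mathbb{H}$ is the real quaternion algebra with basis $1,i,j,k$, $U(\mathbb{H})$ its unit group. $\mathcal{T}:=\langle i,\frac{1+i+j+k}{2}\rangle$ (binary tetrahedral, order 24), $\mathcal{O}:=\langle\frac{1+i}{\sqrt2},\frac{1+i+j+k}{2}\rangle$ (binary octahedral, order 48), $\mathcal{I}:=\langle i,\frac{1+i+j+k}{2},\frac{1+\tau i+\sigma j}{2}\rangle$ with $\tau=\frac{1+\sqrt5}{2}$, $\sigma=\frac{1-\sqrt5}{2}$ (binary icosahedral, order 120). For $n\ge2$, $\omega:=\cos(\pi/n)+i\sin(\pi/n)$ and $\mathcal{D}_n:=\langle\omega,j\rangle$ (order $4n$). For a finite group $K$ put $a\circ b:=ab^{-1}a$; a reflection system for $K$ is a subset $L$ generating $K$, closed under $\circ$, containing $1$. For $H\trianglelefteq K$ with $H\subseteq L$, $LH=L$, $G(K,L,H)$ is the subgroup of $U(\mathbb{H}^2)$ generated by $\mathrm{diag}(h,1),\mathrm{diag}(1,h)$ ($h\in H$) and $M_b=\begin{pmatrix}0&b\\ b^{-1}&0\end{pmatrix}$ ($b\in L$); it is in canonical form, written $G_K(L,H)$, if $\{b\in K: M_b\in G(K,L,H)\}=L$.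 A reflection is a non-identity $g\in U(\mathbb{H}^2)$ with $\operatorname{rank}(g-I)=1$. Isomorphic means isomorphic via a group isomorphism mapping the set of reflections onto the set of reflections. *)

theory Defs
  imports Complex_Main
begin

datatype quat = Quat (qre: real) (qim1: real) (qim2: real) (qim3: real)

instantiation quat :: "{zero, one, plus, minus, uminus, times, inverse}"
begin
definition "0 = Quat 0 0 0 0"
definition "1 = Quat 1 0 0 0"
definition "x + y = Quat (qre x + qre y) (qim1 x + qim1 y) (qim2 x + qim2 y) (qim3 x + qim3 y)"
definition "x - y = Quat (qre x - qre y) (qim1 x - qim1 y) (qim2 x - qim2 y) (qim3 x - qim3 y)"
definition "- x = Quat (- qre x) (- qim1 x) (- qim2 x) (- qim3 x)"
definition "x * y = Quat
   (qre x * qre y - qim1 x * qim1 y - qim2 x * qim2 y - qim3 x * qim3 y)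
   (qre x * qim1 y + qim1 x * qre y + qim2 x * qim3 y - qim3 x * qim2 y)
   (qre x * qim2 y - qim1 x * qim3 y + qim2 x * qre y + qim3 x * qim1 y)
   (qre x * qim3 y + qim1 x * qim2 y - qim2 x * qim1 y + qim3 x * qre y)"
definition "inverse x = (let n = (qre x)\<^sup>2 + (qim1 x)\<^sup>2 + (qim2 x)\<^sup>2 + (qim3 x)\<^sup>2 in
   Quat (qre x / n) (- qim1 x / n) (- qim2 x / n) (- qim3 x / n))"
definition "divide x (y::quat) = x * inverse y"
instance ..
end

definition qcnj :: "quat \<Rightarrow> quat" where
  "qcnj x = Quat (qre x) (- qim1 x) (- qim2 x) (- qim3 x)"

definition qI :: quat where "qI = Quat 0 1 0 0"
definition qJ :: quat where "qJ = Quat 0 0 1 0"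
definition qK :: quat where "qK = Quat 0 0 0 1"

inductive_set qgen :: "quat set \<Rightarrow> quat set" for S :: "quat set" where
  qgen_one: "1 \<in> qgen S"
| qgen_gen: "s \<in> S \<Longrightarrow> s \<in> qgen S"
| qgen_mult: "x \<in> qgen S \<Longrightarrow> y \<in> qgen S \<Longrightarrow> x * y \<in> qgen S"
| qgen_inv: "x \<in> qgen S \<Longrightarrow> inverse x \<in> qgen S"

definition tau :: real where "tau = (1 + sqrt 5) / 2"
definition sigma :: real where "sigma = (1 - sqrt 5) / 2"

definition binT :: "quat set" where
  "binT = qgen {qI, Quat (1/2) (1/2) (1/2) (1/2)}"
definition binO :: "quat set" where
  "binO = qgen {Quat (1 / sqrt 2) (1 / sqrt 2) 0 0, Quat (1/2) (1/2) (1/2) (1/2)}"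
definition binI :: "quat set" where
  "binI = qgen {qI, Quat (1/2) (1/2) (1/2) (1/2), Quat (1/2) (tau/2) (sigma/2) 0}"
definition dicyc :: "nat \<Rightarrow> quat set" where
  "dicyc n = qgen {Quat (cos (pi / real n)) (sin (pi / real n)) 0 0, qJ}"

definition circ :: "quat \<Rightarrow> quat \<Rightarrow> quat" where
  "circ a b = a * inverse b * a"

definition reflection_system :: "quat set \<Rightarrow> quat set \<Rightarrow> bool" where
  "reflection_system K L \<longleftrightarrow> L \<subseteq> K \<and> qgen L = K \<and> 1 \<in> L \<and>
     (\<forall>a\<in>L. \<forall>b\<in>L. circ a b \<in> L)"

definition normal_subgroup :: "quat set \<Rightarrow> quat set \<Rightarrow> bool" where
  "normal_subgroup H K \<longleftrightarrow> H \<subseteq> K \<and> 1 \<in> H \<and>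
     (\<forall>x\<in>H. \<forall>y\<in>H. x * y \<in> H) \<and> (\<forall>x\<in>H. inverse x \<in> H) \<and>
     (\<forall>k\<in>K. \<forall>h\<in>H. k * h * inverse k \<in> H)"

text \<open>\<open>QMat a b c d\<close> is the matrix with rows (a b) and (c d).\<close>
datatype qmat = QMat quat quat quat quat

fun mmul :: "qmat \<Rightarrow> qmat \<Rightarrow> qmat" where
  "mmul (QMat a b c d) (QMat a' b' c' d') =
     QMat (a * a' + b * c') (a * b' + b * d') (c * a' + d * c') (c * b' + d * d')"

fun msub :: "qmat \<Rightarrow> qmat \<Rightarrow> qmat" where
  "msub (QMat a b c d) (QMat a' b' c' d') = QMat (a - a') (b - b') (c - c') (d - d')"

fun madj :: "qmat \<Rightarrow> qmat" where
  "madj (QMat a b c d) = QMat (qcnj a) (qcnj c) (qcnj b) (qcnj d)"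

definition mI :: qmat where "mI = QMat 1 0 0 1"
definition mzero :: qmat where "mzero = QMat 0 0 0 0"

definition unitary :: "qmat set" where
  "unitary = {M. mmul (madj M) M = mI \<and> mmul M (madj M) = mI}"

definition rank_one :: "qmat \<Rightarrow> bool" where
  "rank_one M \<longleftrightarrow> M \<noteq> mzero \<and>
     (\<exists>v1 v2 w1 w2. M = QMat (v1 * w1) (v1 * w2) (v2 * w1) (v2 * w2))"

definition is_reflection :: "qmat \<Rightarrow> bool" where
  "is_reflection g \<longleftrightarrow> g \<in> unitary \<and> g \<noteq> mI \<and> rank_one (msub g mI)"

text \<open>Subgroup of \<open>U(\<bbbH>\<^sup>2)\<close> generated by a set of unitary matrices
  (the inverse of a unitary matrix is its conjugate transpose).\<close>
inductive_set mgen :: "qmat set \<Rightarrow> qmat set" for S :: "qmat set" where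
  mgen_one: "mI \<in> mgen S"
| mgen_gen: "s \<in> S \<Longrightarrow> s \<in> mgen S"
| mgen_mult: "x \<in> mgen S \<Longrightarrow> y \<in> mgen S \<Longrightarrow> mmul x y \<in> mgen S"
| mgen_inv: "x \<in> mgen S \<Longrightarrow> madj x \<in> mgen S"

definition Mb :: "quat \<Rightarrow> qmat" where
  "Mb b = QMat 0 b (inverse b) 0"

text \<open>\<open>G(K,L,H)\<close> (it depends only on \<open>L\<close> and \<open>H\<close>)\<close>
definition GKLH :: "quat set \<Rightarrow> quat set \<Rightarrow> qmat set" where
  "GKLH L H = mgen ((\<lambda>h. QMat h 0 0 1) ` H \<union> (\<lambda>h. QMat 1 0 0 h) ` H \<union> Mb ` L)"

definition canonical_refl_group :: "quat set \<Rightarrow> quat set \<Rightarrow> quat set \<Rightarrow> bool" where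
  "canonical_refl_group K L H \<longleftrightarrow>
     reflection_system K L \<and> normal_subgroup H K \<and> H \<subseteq> L \<and>
     {l * h | l h. l \<in> L \<and> h \<in> H} = L \<and>
     {b \<in> K. Mb b \<in> GKLH L H} = L"

definition refl_isomorphic :: "qmat set \<Rightarrow> qmat set \<Rightarrow> bool" where
  "refl_isomorphic G1 G2 \<longleftrightarrow> (\<exists>\<phi>. bij_betw \<phi> G1 G2 \<and>
     (\<forall>x\<in>G1. \<forall>y\<in>G1. \<phi> (mmul x y) = mmul (\<phi> x) (\<phi> y)) \<and>
     \<phi> ` {g \<in> G1. is_reflection g} = {g \<in> G2. is_reflection g})"

end

theory Submission
  imports Defs
begin

text \<open>Every element of a reflection group for the dicyclic group \<open>\<D>\<^sub>n\<close> is a monomial matrix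
  with entries in \<open>\<complex> \<union> \<complex>j\<close> (where \<open>\<complex> = \<real> + \<real>i\<close>); the square of such an entry lies in \<open>\<complex>\<close>, so
  fourth powers of group elements are diagonal over the commutative field \<open>\<complex>\<close> and commute
  with each other. This property is preserved by group isomorphisms. In a reflection group
  for \<open>K \<in> {\<T>, \<O>, \<I>}\<close>, on the other hand, every \<open>x \<in> K\<close> occurs as the upper left entry of a
  diagonal element, and the fourth powers of \<open>(1+i+j+k)/2\<close> and of its conjugate by \<open>i\<close> do
  not commute.\<close>

lemma quat_mult_zero [simp]: "x * (0::quat) = 0" "(0::quat) * x = 0"
  by (simp_all add: times_quat_def zero_quat_def)

lemma quat_add_zero [simp]: "x + (0::quat) = x" "(0::quat) + x = x"
  by (cases x, simp add: plus_quat_def zero_quat_def)+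

lemma quat_mult_one [simp]: "x * (1::quat) = x" "(1::quat) * x = x"
  by (cases x, simp add: times_quat_def one_quat_def)+

lemma quat_inverse_one [simp]: "inverse (1::quat) = 1"
  by (simp add: inverse_quat_def one_quat_def)

lemma qcnj_zero [simp]: "qcnj 0 = 0"
  by (simp add: qcnj_def zero_quat_def)

lemma qgen_subset:
  assumes "1 \<in> A" "S \<subseteq> A"
    and "\<And>x y. x \<in> A \<Longrightarrow> y \<in> A \<Longrightarrow> x * y \<in> A"
    and "\<And>x. x \<in> A \<Longrightarrow> inverse x \<in> A"
  shows "qgen S \<subseteq> A"
proof
  show "x \<in> A" if "x \<in> qgen S" for x
    using that by induction (use assms in auto)
qed

lemma mgen_subset:
  assumes "mI \<in> A" "S \<subseteq> A"
    and "\<And>x y. x \<in> A \<Longrightarrow> y \<in> A \<Longrightarrow> mmul x y \<in> A"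
    and "\<And>x. x \<in> A \<Longrightarrow> madj x \<in> A"
  shows "mgen S \<subseteq> A"
proof
  show "x \<in> A" if "x \<in> mgen S" for x
    using that by induction (use assms in auto)
qed

definition qnorm_sq :: "quat \<Rightarrow> real" where
  "qnorm_sq x = (qre x)\<^sup>2 + (qim1 x)\<^sup>2 + (qim2 x)\<^sup>2 + (qim3 x)\<^sup>2"

lemma qnorm_sq_one [simp]: "qnorm_sq 1 = 1"
  by (simp add: qnorm_sq_def one_quat_def)

lemma qnorm_sq_mult: "qnorm_sq (x * y) = qnorm_sq x * qnorm_sq y"
  by (simp add: qnorm_sq_def times_quat_def power2_eq_square algebra_simps)

lemma qnorm_sq_inverse: "qnorm_sq x = 1 \<Longrightarrow> qnorm_sq (inverse x) = 1"
  by (simp add: qnorm_sq_def inverse_quat_def Let_def)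

lemma inverse_eq_qcnj: "qnorm_sq x = 1 \<Longrightarrow> inverse x = qcnj x"
  by (simp add: qnorm_sq_def inverse_quat_def qcnj_def Let_def)

lemma qgen_units:
  assumes "\<forall>s\<in>S. qnorm_sq s = 1" and "x \<in> qgen S"
  shows "qnorm_sq x = 1"
proof -
  have "qgen S \<subseteq> {x. qnorm_sq x = 1}"
    using assms(1) by (intro qgen_subset) (auto simp: qnorm_sq_mult qnorm_sq_inverse)
  then show ?thesis using assms(2) by blast
qed

lemma tau_sq_plus_sigma_sq: "tau\<^sup>2 + sigma\<^sup>2 = 3"
  by (simp add: tau_def sigma_def power2_eq_square field_simps)

lemma binary_polyhedral_units:
  assumes "K \<in> {binT, binO, binI}" and "x \<in> K"
  shows "qnorm_sq x = 1"
proof -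
  have "qnorm_sq (Quat (1/2) (tau/2) (sigma/2) 0) = (1 + (tau\<^sup>2 + sigma\<^sup>2)) / 4"
    by (simp add: qnorm_sq_def power_divide)
  then have "qnorm_sq (Quat (1/2) (tau/2) (sigma/2) 0) = 1"
    by (simp add: tau_sq_plus_sigma_sq)
  moreover have "qnorm_sq qI = 1" "qnorm_sq (Quat (1/2) (1/2) (1/2) (1/2)) = 1"
    "qnorm_sq (Quat (1 / sqrt 2) (1 / sqrt 2) 0 0) = 1"
    by (simp_all add: qnorm_sq_def qI_def power_divide power2_eq_square)
  ultimately show ?thesis
    using assms by (auto simp: binT_def binO_def binI_def intro: qgen_units[rotated])
qed

definition q_tetra :: quat where "q_tetra = Quat (1/2) (1/2) (1/2) (1/2)"

lemma binary_polyhedral_generators: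
  assumes "K \<in> {binT, binO, binI}"
  shows "q_tetra \<in> K" "qI \<in> K"
proof -
  show "q_tetra \<in> K"
    using assms by (auto simp: binT_def binO_def binI_def q_tetra_def intro: qgen.intros)
  let ?s = "Quat (1 / sqrt 2) (1 / sqrt 2) 0 0"
  have "?s * ?s = qI"
    by (simp add: times_quat_def qI_def)
  moreover have "?s * ?s \<in> binO"
    unfolding binO_def by (intro qgen_mult qgen_gen) simp_all
  ultimately show "qI \<in> K"
    using assms by (auto simp: binT_def binI_def intro: qgen.intros)
qed

definition Cplx :: "quat set" where
  "Cplx = {x. qim2 x = 0 \<and> qim3 x = 0}"

definition Cplx_j :: "quat set" where
  "Cplx_j = {x. qre x = 0 \<and> qim1 x = 0}"

lemma Cplx_mult_commute: "x \<in> Cplx \<Longrightarrow> y \<in> Cplx \<Longrightarrow> x * y = y * x"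
  by (simp add: Cplx_def times_quat_def algebra_simps)

lemma Cplx_Un_Cplx_j_mult: "x \<in> Cplx \<union> Cplx_j \<Longrightarrow> y \<in> Cplx \<union> Cplx_j \<Longrightarrow> x * y \<in> Cplx \<union> Cplx_j"
  by (auto simp: Cplx_def Cplx_j_def times_quat_def)

lemma Cplx_Un_Cplx_j_inverse: "x \<in> Cplx \<union> Cplx_j \<Longrightarrow> inverse x \<in> Cplx \<union> Cplx_j"
  by (auto simp: Cplx_def Cplx_j_def inverse_quat_def Let_def)

lemma Cplx_Un_Cplx_j_qcnj: "x \<in> Cplx \<union> Cplx_j \<Longrightarrow> qcnj x \<in> Cplx \<union> Cplx_j"
  by (auto simp: Cplx_def Cplx_j_def qcnj_def)

lemma Cplx_Un_Cplx_j_square: "x \<in> Cplx \<union> Cplx_j \<Longrightarrow> x * x \<in> Cplx"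
  by (auto simp: Cplx_def Cplx_j_def times_quat_def)

lemma one_in_Cplx: "1 \<in> Cplx"
  by (simp add: Cplx_def one_quat_def)

lemma dicyc_subset_Cplx_Un_Cplx_j: "dicyc n \<subseteq> Cplx \<union> Cplx_j"
  unfolding dicyc_def
  by (intro qgen_subset Cplx_Un_Cplx_j_mult Cplx_Un_Cplx_j_inverse)
    (auto simp: Cplx_def Cplx_j_def qJ_def one_quat_def)

lemma GKLH_mmul: "x \<in> GKLH L H \<Longrightarrow> y \<in> GKLH L H \<Longrightarrow> mmul x y \<in> GKLH L H"
  unfolding GKLH_def by (rule mgen_mult)

lemma GKLH_madj: "x \<in> GKLH L H \<Longrightarrow> madj x \<in> GKLH L H"
  unfolding GKLH_def by (rule mgen_inv)

lemma Mb_in_GKLH: "b \<in> L \<Longrightarrow> Mb b \<in> GKLH L H"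
  unfolding GKLH_def by (rule mgen_gen) blast

lemma ex_diagonal_in_GKLH:
  assumes "1 \<in> L" and units: "\<forall>l\<in>L. qnorm_sq l = 1" and "x \<in> qgen L"
  shows "\<exists>y. QMat x 0 0 y \<in> GKLH L H"
  using \<open>x \<in> qgen L\<close>
proof induction
  case qgen_one
  have "mI \<in> GKLH L H"
    unfolding GKLH_def by (rule mgen_one)
  then show ?case by (auto simp: mI_def)
next
  case (qgen_gen b)
  have "mmul (Mb b) (Mb 1) \<in> GKLH L H"
    using qgen_gen \<open>1 \<in> L\<close> by (intro GKLH_mmul Mb_in_GKLH)
  then show ?case by (auto simp: Mb_def)
next
  case (qgen_mult x y)
  then obtain a b where "QMat x 0 0 a \<in> GKLH L H" "QMat y 0 0 b \<in> GKLH L H" by blast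
  then have "mmul (QMat x 0 0 a) (QMat y 0 0 b) \<in> GKLH L H" by (rule GKLH_mmul)
  then show ?case by auto
next
  case (qgen_inv x)
  then obtain a where "QMat x 0 0 a \<in> GKLH L H" by blast
  then have "madj (QMat x 0 0 a) \<in> GKLH L H" by (rule GKLH_madj)
  moreover have "inverse x = qcnj x"
    using qgen_inv units by (simp add: qgen_units inverse_eq_qcnj)
  ultimately show ?case by auto
qed

fun monomial_over :: "quat set \<Rightarrow> qmat \<Rightarrow> bool" where
  "monomial_over A (QMat a b c d) \<longleftrightarrow>
     (b = 0 \<and> c = 0 \<and> a \<in> A \<and> d \<in> A) \<or> (a = 0 \<and> d = 0 \<and> b \<in> A \<and> c \<in> A)"

lemma GKLH_monomial_over:
  assumes "L \<subseteq> A" "H \<subseteq> A" "1 \<in> A"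
    and mult: "\<And>x y. x \<in> A \<Longrightarrow> y \<in> A \<Longrightarrow> x * y \<in> A"
    and inverse: "\<And>x. x \<in> A \<Longrightarrow> inverse x \<in> A"
    and qcnj: "\<And>x. x \<in> A \<Longrightarrow> qcnj x \<in> A"
    and "g \<in> GKLH L H"
  shows "monomial_over A g"
proof -
  have "GKLH L H \<subseteq> {g. monomial_over A g}"
    unfolding GKLH_def
  proof (rule mgen_subset)
    fix x y assume "x \<in> {g. monomial_over A g}" "y \<in> {g. monomial_over A g}"
    then show "mmul x y \<in> {g. monomial_over A g}"
      by (cases x; cases y) (auto intro: mult)
  next
    fix x assume "x \<in> {g. monomial_over A g}"
    then show "madj x \<in> {g. monomial_over A g}"
      by (cases x) (auto intro: qcnj)
  qed (use assms(1-3) inverse in \<open>auto simp: mI_def Mb_def\<close>)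
  then show ?thesis using \<open>g \<in> GKLH L H\<close> by blast
qed

definition msq :: "qmat \<Rightarrow> qmat" where
  "msq g = mmul g g"

lemma msq_diagonal [simp]: "msq (QMat a 0 0 d) = QMat (a * a) 0 0 (d * d)"
  by (simp add: msq_def)

lemma msq_monomial_over:
  assumes "monomial_over A g" and mult: "\<And>x y. x \<in> A \<Longrightarrow> y \<in> A \<Longrightarrow> x * y \<in> A"
  shows "\<exists>a d. msq g = QMat a 0 0 d \<and> a \<in> A \<and> d \<in> A"
  using assms(1) by (cases g) (auto simp: msq_def intro: mult)

definition fourth_powers_commute :: "qmat set \<Rightarrow> bool" where
  "fourth_powers_commute G \<longleftrightarrow>
     (\<forall>g\<in>G. \<forall>h\<in>G. mmul (msq (msq g)) (msq (msq h)) = mmul (msq (msq h)) (msq (msq g)))"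

lemma fourth_powers_commute_inj_hom:
  assumes "inj_on f G" "f ` G \<subseteq> G'" "fourth_powers_commute G'"
    and closed: "\<And>x y. x \<in> G \<Longrightarrow> y \<in> G \<Longrightarrow> mmul x y \<in> G"
    and hom: "\<And>x y. x \<in> G \<Longrightarrow> y \<in> G \<Longrightarrow> f (mmul x y) = mmul (f x) (f y)"
  shows "fourth_powers_commute G"
  unfolding fourth_powers_commute_def
proof (intro ballI)
  fix g h assume "g \<in> G" "h \<in> G"
  define p where "p x = msq (msq x)" for x
  have p_in: "p x \<in> G" if "x \<in> G" for x
    using that by (simp add: p_def msq_def closed)
  have f_p: "f (p x) = p (f x)" if "x \<in> G" for x
    using that by (simp add: p_def msq_def closed hom)
  have "f (mmul (p g) (p h)) = mmul (p (f g)) (p (f h))"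
    using \<open>g \<in> G\<close> \<open>h \<in> G\<close> by (simp add: hom p_in f_p)
  also have "\<dots> = mmul (p (f h)) (p (f g))"
    using assms(2,3) \<open>g \<in> G\<close> \<open>h \<in> G\<close> by (auto simp: fourth_powers_commute_def p_def)
  also have "\<dots> = f (mmul (p h) (p g))"
    using \<open>g \<in> G\<close> \<open>h \<in> G\<close> by (simp add: hom p_in f_p)
  finally have "mmul (p g) (p h) = mmul (p h) (p g)"
    using \<open>inj_on f G\<close> \<open>g \<in> G\<close> \<open>h \<in> G\<close> by (auto intro: inj_onD closed p_in)
  then show "mmul (msq (msq g)) (msq (msq h)) = mmul (msq (msq h)) (msq (msq g))"
    by (simp add: p_def)
qed

lemma fourth_power_monomial_over_Cplx_Un_Cplx_j:
  assumes "monomial_over (Cplx \<union> Cplx_j) g"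
  shows "\<exists>a d. msq (msq g) = QMat a 0 0 d \<and> a \<in> Cplx \<and> d \<in> Cplx"
proof -
  obtain a d where "msq g = QMat a 0 0 d" "a \<in> Cplx \<union> Cplx_j" "d \<in> Cplx \<union> Cplx_j"
    using msq_monomial_over[OF assms Cplx_Un_Cplx_j_mult] by blast
  then show ?thesis
    by (simp add: Cplx_Un_Cplx_j_square)
qed

lemma dicyclic_fourth_powers_commute:
  assumes "canonical_refl_group (dicyc n) L H"
  shows "fourth_powers_commute (GKLH L H)"
  unfolding fourth_powers_commute_def
proof (intro ballI)
  have "L \<subseteq> dicyc n" "H \<subseteq> dicyc n"
    using assms by (auto simp: canonical_refl_group_def reflection_system_def normal_subgroup_def)
  then have "L \<subseteq> Cplx \<union> Cplx_j" "H \<subseteq> Cplx \<union> Cplx_j"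
    using dicyc_subset_Cplx_Un_Cplx_j by blast+
  moreover have "1 \<in> Cplx \<union> Cplx_j"
    by (simp add: one_in_Cplx)
  ultimately have monomial: "monomial_over (Cplx \<union> Cplx_j) g" if "g \<in> GKLH L H" for g
    using GKLH_monomial_over Cplx_Un_Cplx_j_mult Cplx_Un_Cplx_j_inverse Cplx_Un_Cplx_j_qcnj that
    by metis
  fix g h assume "g \<in> GKLH L H" "h \<in> GKLH L H"
  then obtain a d a' d' where "msq (msq g) = QMat a 0 0 d" "a \<in> Cplx" "d \<in> Cplx"
    and "msq (msq h) = QMat a' 0 0 d'" "a' \<in> Cplx" "d' \<in> Cplx"
    using fourth_power_monomial_over_Cplx_Un_Cplx_j monomial by meson
  then show "mmul (msq (msq g)) (msq (msq h)) = mmul (msq (msq h)) (msq (msq g))"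
    by (simp add: Cplx_mult_commute)
qed

lemma fourth_powers_q_tetra_conj_not_commute:
  defines "r \<equiv> qI * q_tetra * inverse qI"
  shows "(q_tetra * q_tetra) * (q_tetra * q_tetra) * ((r * r) * (r * r))
           \<noteq> ((r * r) * (r * r)) * ((q_tetra * q_tetra) * (q_tetra * q_tetra))"
proof -
  have "r = Quat (1/2) (1/2) (-1/2) (-1/2)"
    by (simp add: r_def q_tetra_def qI_def times_quat_def inverse_quat_def)
  then have "(r * r) * (r * r) = Quat (-1/2) (-1/2) (1/2) (1/2)"
    by (simp add: times_quat_def)
  moreover have "(q_tetra * q_tetra) * (q_tetra * q_tetra) = Quat (-1/2) (-1/2) (-1/2) (-1/2)"
    by (simp add: q_tetra_def times_quat_def)
  ultimately show ?thesis
    by (simp add: times_quat_def)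
qed

lemma binary_polyhedral_fourth_powers_not_commute:
  assumes "K \<in> {binT, binO, binI}" and "canonical_refl_group K L H"
  shows "\<not> fourth_powers_commute (GKLH L H)"
proof
  assume commute: "fourth_powers_commute (GKLH L H)"
  have "1 \<in> L" "qgen L = K" "L \<subseteq> K"
    using assms(2) by (auto simp: canonical_refl_group_def reflection_system_def)
  moreover have "\<forall>l\<in>L. qnorm_sq l = 1"
    using \<open>L \<subseteq> K\<close> binary_polyhedral_units[OF assms(1)] by blast
  ultimately have diagonal: "\<exists>y. QMat x 0 0 y \<in> GKLH L H" if "x \<in> K" for x
    using that ex_diagonal_in_GKLH by blast
  define r where "r = qI * q_tetra * inverse qI"
  have "q_tetra \<in> qgen L" "qI \<in> qgen L"
    using binary_polyhedral_generators[OF assms(1)] \<open>qgen L = K\<close> by simp_all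
  then have "q_tetra \<in> K" "r \<in> K"
    unfolding r_def \<open>qgen L = K\<close>[symmetric] by (simp_all add: qgen_mult qgen_inv)
  then obtain y z where "QMat q_tetra 0 0 y \<in> GKLH L H" "QMat r 0 0 z \<in> GKLH L H"
    using diagonal by blast
  with commute have "mmul (msq (msq (QMat q_tetra 0 0 y))) (msq (msq (QMat r 0 0 z)))
      = mmul (msq (msq (QMat r 0 0 z))) (msq (msq (QMat q_tetra 0 0 y)))"
    unfolding fourth_powers_commute_def by blast
  with fourth_powers_q_tetra_conj_not_commute show False
    by (simp add: r_def)
qed

theorem proposition5p11:
  fixes K L H L' H' :: "quat set" and n :: nat
  assumes "K \<in> {binT, binO, binI}"
    and "canonical_refl_group K L H"
    and "n \<ge> 2"
    and "canonical_refl_group (dicyc n) L' H'"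
  shows "\<not> refl_isomorphic (GKLH L H) (GKLH L' H')"
proof
  assume "refl_isomorphic (GKLH L H) (GKLH L' H')"
  then obtain f where bij: "bij_betw f (GKLH L H) (GKLH L' H')"
    and hom: "\<forall>x\<in>GKLH L H. \<forall>y\<in>GKLH L H. f (mmul x y) = mmul (f x) (f y)"
    unfolding refl_isomorphic_def by blast
  from bij have "inj_on f (GKLH L H)" "f ` GKLH L H \<subseteq> GKLH L' H'"
    by (simp_all add: bij_betw_def)
  moreover have "fourth_powers_commute (GKLH L' H')"
    \<comment> \<open>This holds for every \<open>n\<close>.\<close>
    using assms(4) by (rule dicyclic_fourth_powers_commute)
  ultimately have "fourth_powers_commute (GKLH L H)"
    by (rule fourth_powers_commute_inj_hom) (simp_all add: GKLH_mmul hom)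
  with binary_polyhedral_fourth_powers_not_commute[OF assms(1,2)] show False ..
qed

end
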